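(* Let $\alpha\in(0,1)$, $T>0$, and let $y\in C^1([0,T])$. Fix $t\in(0,T)$, and for $n\in\mathbb{N}$ put $h=t/n$, $t_k=kh$, $y_k=y(t_k)$. Define the remainder $r_n$ by $$J^\alpha\delta^\alpha y_n = y_n - y_0 + r_n .$$ Then, setting $\beta:=\min(\alpha,1-\alpha)$, there are a constant $C$ depending only on $\alpha$ and $y$ and an $n_0$ such that for all $n\ge n_0$ (i.e. as $n\to\infty$ with $nh=t$) $$|r_n|\le C\,h^{\beta}\int_0^t (t-s)^{-\beta}\,|y'(s)|\,ds .$$
   Context: For $\beta>0$ and integers $j\ge 1$, the weights are $b_j(\beta)=j^\beta-(j-1)^\beta$. For a time step $h>0$, mesh points $t_k=kh$ and values $y_k=y(t_k)$, the discrete fractional integral (rectangle rule) and the L1 discretization of the Caputo derivative of order $\alpha\in(0,1)$ are $$J^\alpha y_n=\frac{h^\alpha}{\Gamma(1+\alpha)}\sum_{i=0}^{n-1} b_{n-i}(\alpha)\,y_{i+1},\qquad \delta^\alpha y_n=\frac{h^{-\alpha}}{\Gamma(2-\alpha)}\sum_{i=0}^{n-1} b_{n-i}(1-\alpha)\,(y_{i+1}-y_i).$$ The composition $J^\alpha\delta^\alpha y_n$ means $J^\alpha$ applied to the sequence $(\delta^\alpha y_k)_{k\ge1}$, i.e. $J^\alpha\delta^\alpha y_n=\frac{h^\alpha}{\Gamma(1+\alpha)}\sum_{i=0}^{n-1} b_{n-i}(\alpha)\,\delta^\alpha y_{i+1}$. *)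

theory Defs
  imports "HOL-Analysis.Analysis"
begin

definition bw :: "real \<Rightarrow> nat \<Rightarrow> real" where
  "bw \<beta> j = real j powr \<beta> - (real j - 1) powr \<beta>"

text \<open>Discrete fractional integral (rectangle rule) J^alpha y_n.\<close>
definition Jfrac :: "real \<Rightarrow> real \<Rightarrow> (nat \<Rightarrow> real) \<Rightarrow> nat \<Rightarrow> real" where
  "Jfrac \<alpha> h y n = h powr \<alpha> / Gamma (1 + \<alpha>) * (\<Sum>i<n. bw \<alpha> (n - i) * y (i + 1))"

text \<open>L1 discretisation of the Caputo derivative delta^alpha y_n.\<close>
definition L1 :: "real \<Rightarrow> real \<Rightarrow> (nat \<Rightarrow> real) \<Rightarrow> nat \<Rightarrow> real" where
  "L1 \<alpha> h y n = h powr (- \<alpha>) / Gamma (2 - \<alpha>) *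
     (\<Sum>i<n. bw (1 - \<alpha>) (n - i) * (y (i + 1) - y i))"

end

theory Submission
  imports Defs
begin

text \<open>
  Exchanging the two sums gives
  \<open>J\<^sup>\<alpha>\<delta>\<^sup>\<alpha>y\<^sub>n = \<Sum>\<^sub>j c\<^sub>n\<^sub>-\<^sub>j (y\<^sub>j\<^sub>+\<^sub>1 - y\<^sub>j)\<close>,
  where \<open>\<Gamma>(1+\<alpha>)\<Gamma>(2-\<alpha>) c\<^sub>m = \<Sum>\<^sub>i<\<^sub>m b\<^sub>m\<^sub>-\<^sub>i(\<alpha>) b\<^sub>i\<^sub>+\<^sub>1(1-\<alpha>)\<close>.
  Each summand is the product of the integrals over the cell \<open>[i, i+1]\<close> of
  \<open>(u\<^sup>1\<^sup>-\<^sup>\<alpha>)'\<close> and of \<open>(-(m-u)\<^sup>\<alpha>)'\<close>, whereas the integral of the product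
  of these two derivatives over \<open>[0, m]\<close> is a Beta integral equal to \<open>\<Gamma>(1+\<alpha>)\<Gamma>(2-\<alpha>)\<close>.
  Comparing cell by cell shows \<open>|c\<^sub>m - 1| \<le> C m\<^sup>-\<^sup>\<beta>\<close>.
  Hence \<open>r\<^sub>n = \<Sum>\<^sub>j (c\<^sub>n\<^sub>-\<^sub>j - 1)(y\<^sub>j\<^sub>+\<^sub>1 - y\<^sub>j)\<close> with
  \<open>|y\<^sub>j\<^sub>+\<^sub>1 - y\<^sub>j| \<le> \<integral>|y'|\<close> over the \<open>j\<close>-th cell, on which
  \<open>(n-j)\<^sup>-\<^sup>\<beta> \<le> h\<^sup>\<beta> (t-s)\<^sup>-\<^sup>\<beta>\<close>; the estimate in fact holds for every \<open>n \<ge> 1\<close>.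
\<close>

lemma powr_diff_bounds:
  fixes a b q :: real
  assumes "0 < a" "a < b" "0 < q" "q < 1"
  shows "q * b powr (q - 1) * (b - a) \<le> b powr q - a powr q"
    and "b powr q - a powr q \<le> q * a powr (q - 1) * (b - a)"
proof -
  have "\<And>x. a \<le> x \<Longrightarrow> x \<le> b \<Longrightarrow> ((\<lambda>z. z powr q) has_real_derivative q * x powr (q - 1)) (at x)"
    using assms by (auto intro: has_real_derivative_powr)
  from MVT2[OF assms(2) this]
  obtain z where z: "a < z" "z < b" "b powr q - a powr q = (b - a) * (q * z powr (q - 1))"
    by blast
  have "b powr (q - 1) \<le> z powr (q - 1)" "z powr (q - 1) \<le> a powr (q - 1)"
    using z assms by (auto intro: powr_mono2')
  then show "q * b powr (q - 1) * (b - a) \<le> b powr q - a powr q"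
    and "b powr q - a powr q \<le> q * a powr (q - 1) * (b - a)"
    using z assms by (auto simp: mult_ac intro!: mult_left_mono mult_right_mono)
qed

lemma has_integral_powr_derivative:
  fixes a b q :: real
  assumes "0 \<le> a" "a \<le> b" "0 < q"
  shows "((\<lambda>u. q * u powr (q - 1)) has_integral (b powr q - a powr q)) {a..b}"
proof (rule fundamental_theorem_of_calculus_interior[OF assms(2)])
  show "continuous_on {a..b} (\<lambda>u. u powr q)"
    using assms by (intro continuous_on_powr') (auto intro: continuous_intros)
  fix x assume "x \<in> {a<..<b}"
  then have "0 < x" using assms by auto
  then show "((\<lambda>u. u powr q) has_vector_derivative q * x powr (q - 1)) (at x)"
    using has_real_derivative_powr[of x q]
    by (simp add: has_real_derivative_iff_has_vector_derivative)
qed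

lemma has_integral_powr_derivative_reflected:
  fixes a b p M :: real
  assumes "a \<le> b" "b \<le> M" "0 < p"
  shows "((\<lambda>u. p * (M - u) powr (p - 1)) has_integral ((M - a) powr p - (M - b) powr p)) {a..b}"
proof -
  have "((\<lambda>u. p * (M - u) powr (p - 1)) has_integral
          (- ((M - b) powr p) - - ((M - a) powr p))) {a..b}"
  proof (rule fundamental_theorem_of_calculus_interior[OF assms(1)])
    show "continuous_on {a..b} (\<lambda>u. - ((M - u) powr p))"
      using assms by (intro continuous_intros continuous_on_powr') (auto intro: continuous_intros)
    fix x assume "x \<in> {a<..<b}"
    then have "0 < M - x" using assms by auto
    then have "((\<lambda>u. - ((M - u) powr p)) has_real_derivative - (p * (M - x) powr (p - 1) * (-1))) (at x)"
      by (intro derivative_eq_intros DERIV_chain2[of "\<lambda>z. z powr p"] has_real_derivative_powr) auto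
    then show "((\<lambda>u. - ((M - u) powr p)) has_vector_derivative p * (M - x) powr (p - 1)) (at x)"
      by (simp add: has_real_derivative_iff_has_vector_derivative)
  qed
  then show ?thesis by simp
qed

lemma powr_divide_le:
  fixes M c a :: real
  assumes "0 < M" "1 \<le> c" "0 \<le> a" "a \<le> 1"
  shows "(M / c) powr (- a) \<le> c * M powr (- a)"
proof -
  have "(M / c) powr (- a) = M powr (- a) / c powr (- a)"
    using assms by (simp add: powr_divide)
  also have "\<dots> = c powr a * M powr (- a)"
    using assms by (simp add: powr_minus field_simps)
  also have "\<dots> \<le> c powr 1 * M powr (- a)"
    using assms by (intro mult_right_mono powr_mono) auto
  finally show ?thesis using assms by simp
qed

lemma bw_Suc: "bw q (Suc i) = (real i + 1) powr q - real i powr q"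
  by (simp add: bw_def add.commute)

lemma bw_Suc_nonneg:
  assumes "0 \<le> q"
  shows "0 \<le> bw q (Suc i)"
  using assms by (simp add: bw_Suc powr_mono2)

lemma bw_Suc_le:
  assumes "0 < q" "q < 1" "1 \<le> i"
  shows "bw q (Suc i) \<le> q * real i powr (q - 1)"
  using powr_diff_bounds(2)[of "real i" "real i + 1" q] assms by (simp add: bw_Suc)

lemma bw_Suc_le_one:
  assumes "0 < q" "q < 1"
  shows "bw q (Suc i) \<le> 1"
proof (cases "i = 0")
  case False
  then have "bw q (Suc i) \<le> q * real i powr (q - 1)"
    using assms by (intro bw_Suc_le) auto
  also have "\<dots> \<le> 1 * 1 powr (q - 1)"
    using assms False by (intro mult_mono powr_mono2') auto
  finally show ?thesis by simp
qed (simp add: bw_def)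

lemma bw_Suc_le_powr_divide:
  assumes "0 < q" "q < 1" "1 \<le> i" "0 < M" "1 \<le> c" "M \<le> c * real i"
  shows "bw q (Suc i) \<le> c * M powr (q - 1)"
proof -
  have "bw q (Suc i) \<le> q * real i powr (q - 1)"
    using assms by (intro bw_Suc_le)
  also have "\<dots> \<le> 1 * (M / c) powr (q - 1)"
  proof -
    have "M / c \<le> real i" using assms by (simp add: divide_le_eq mult.commute)
    then show ?thesis using assms by (intro mult_mono powr_mono2') auto
  qed
  also have "\<dots> \<le> c * M powr (q - 1)"
    using assms powr_divide_le[of M c "1 - q"] by simp
  finally show ?thesis .
qed

lemma integral_eq_sum_cells:
  fixes f :: "real \<Rightarrow> 'a::banach" and h :: real
  assumes "f integrable_on {0..real n * h}" "0 \<le> h"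
  shows "integral {0..real n * h} f = (\<Sum>j<n. integral {real j * h..real (Suc j) * h} f)"
  using assms(1)
proof (induction n)
  case (Suc n)
  have le: "real n * h \<le> real (Suc n) * h" using assms(2) by (simp add: algebra_simps)
  have "f integrable_on {0..real n * h}"
    by (rule integrable_subinterval_real[OF Suc.prems]) (use le in auto)
  moreover have "integral {0..real (Suc n) * h} f
      = integral {0..real n * h} f + integral {real n * h..real (Suc n) * h} f"
    using Henstock_Kurzweil_Integration.integral_combine[OF _ le Suc.prems] assms(2) by simp
  ultimately show ?case using Suc.IH by simp
qed simp

text \<open>The product \<open>(u\<^sup>1\<^sup>-\<^sup>\<alpha>)' (-(M-u)\<^sup>\<alpha>)'\<close>.\<close>
definition comp_kernel :: "real \<Rightarrow> real \<Rightarrow> real \<Rightarrow> real" where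
  "comp_kernel \<alpha> M u = (1 - \<alpha>) * u powr (- \<alpha>) * (\<alpha> * (M - u) powr (\<alpha> - 1))"

lemma has_integral_comp_kernel:
  fixes \<alpha> M :: real
  assumes "0 < \<alpha>" "\<alpha> < 1" "0 < M"
  shows "(comp_kernel \<alpha> M has_integral Gamma (1 + \<alpha>) * Gamma (2 - \<alpha>)) {0..M}"
proof -
  define q where "q = 1 - \<alpha>"
  have q: "0 < q" "q < 1" using assms by (auto simp: q_def)
  define beta where "beta = (\<lambda>t::real. t powr (q - 1) * (1 - t) powr (\<alpha> - 1))"
  have "(beta has_integral Beta q \<alpha>) {0..1}"
    unfolding beta_def using has_integral_Beta_real[OF q(1) assms(1)] .
  then have "((\<lambda>x. beta ((1 / M) * x)) has_integral (1 / \<bar>1 / M\<bar>) *\<^sub>R Beta q \<alpha>)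
      ((\<lambda>x. x / (1 / M)) ` {0..1})"
    by (rule has_integral_stretch_real) (use assms in auto)
  moreover have "(\<lambda>x. x / (1 / M)) ` {0..1} = {0..M}"
    using image_affinity_atLeastAtMost[of M 0 0 1] assms by (simp add: mult.commute)
  ultimately have "((\<lambda>x. beta (x / M)) has_integral M * Beta q \<alpha>) {0..M}"
    using assms by simp
  then have scaled: "((\<lambda>x. (q * \<alpha> / M) * beta (x / M)) has_integral (q * \<alpha> / M) * (M * Beta q \<alpha>)) {0..M}"
    by (rule has_integral_mult_right)
  have kernel: "(q * \<alpha> / M) * beta (x / M) = comp_kernel \<alpha> M x" if "x \<in> {0..M}" for x
  proof -
    have "1 - x / M = (M - x) / M" using assms by (simp add: field_simps)
    then have "beta (x / M) = x powr (q - 1) / M powr (q - 1) * ((M - x) powr (\<alpha> - 1) / M powr (\<alpha> - 1))"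
      using that assms by (simp add: beta_def powr_divide)
    also have "\<dots> = x powr (q - 1) * (M - x) powr (\<alpha> - 1) / M powr ((q - 1) + (\<alpha> - 1))"
      by (simp only: powr_add times_divide_times_eq)
    also have "(q - 1) + (\<alpha> - 1) = -1" by (simp add: q_def)
    finally show ?thesis
      using assms by (simp add: comp_kernel_def q_def powr_minus_divide)
  qed
  have Gamma_value: "(q * \<alpha> / M) * (M * Beta q \<alpha>) = Gamma (1 + \<alpha>) * Gamma (2 - \<alpha>)"
  proof -
    have nonpos: "q \<notin> \<int>\<^sub>\<le>\<^sub>0" "\<alpha> \<notin> \<int>\<^sub>\<le>\<^sub>0" using q assms by (auto dest: nonpos_Ints_nonpos)
    have "Beta q \<alpha> = Gamma q * Gamma \<alpha>" by (simp add: Beta_altdef q_def)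
    moreover have "Gamma (1 + \<alpha>) = \<alpha> * Gamma \<alpha>" using Gamma_plus1[OF nonpos(2)] by (simp add: add.commute)
    moreover have "Gamma (2 - \<alpha>) = q * Gamma q" using Gamma_plus1[OF nonpos(1)] by (simp add: q_def)
    ultimately show ?thesis using assms by (simp add: field_simps)
  qed
  show ?thesis
    using has_integral_eq[OF kernel scaled] Gamma_value by simp
qed

lemma comp_kernel_integrable_on:
  assumes "0 < \<alpha>" "\<alpha> < 1" "0 \<le> a" "a \<le> b" "b \<le> M" "a < M"
  shows "comp_kernel \<alpha> M integrable_on {a..b}"
proof -
  have "comp_kernel \<alpha> M integrable_on {0..M}"
    using has_integral_comp_kernel[of \<alpha> M] assms by (simp add: has_integral_integrable)
  moreover have "{a..b} \<subseteq> {0..M}" using assms by auto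
  ultimately show ?thesis by (rule integrable_subinterval_real)
qed

text \<open>
  On a cell the first factor of \<open>comp_kernel\<close> integrates to \<open>B\<close>, and the second factor
  varies between its values at the endpoints, which also bracket its mean value.
\<close>
lemma comp_kernel_cell_error:
  fixes \<alpha> M i :: real
  assumes a: "0 < \<alpha>" "\<alpha> < 1" and i: "0 \<le> i" "i + 1 \<le> M - 1"
  defines "B \<equiv> (i + 1) powr (1 - \<alpha>) - i powr (1 - \<alpha>)"
  shows "\<bar>((M - i) powr \<alpha> - (M - i - 1) powr \<alpha>) * B - integral {i..i+1} (comp_kernel \<alpha> M)\<bar>
         \<le> B * (\<alpha> * (M - i - 1) powr (\<alpha> - 1) - \<alpha> * (M - i) powr (\<alpha> - 1))"
proof -
  define A where "A = (M - i) powr \<alpha> - (M - i - 1) powr \<alpha>"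
  define D where "D = \<alpha> * (M - i - 1) powr (\<alpha> - 1) - \<alpha> * (M - i) powr (\<alpha> - 1)"
  define g where "g = (\<lambda>u::real. (1 - \<alpha>) * u powr (- \<alpha>))"
  have gI: "(g has_integral B) {i..i+1}"
    using has_integral_powr_derivative[of i "i + 1" "1 - \<alpha>"] i a by (simp add: g_def B_def)
  have kI: "comp_kernel \<alpha> M integrable_on {i..i+1}"
    using a i by (intro comp_kernel_integrable_on) auto
  have A: "\<alpha> * (M - i) powr (\<alpha> - 1) \<le> A" "A \<le> \<alpha> * (M - i - 1) powr (\<alpha> - 1)"
    using powr_diff_bounds[of "M - i - 1" "M - i" \<alpha>] a i unfolding A_def by auto
  have pointwise: "\<bar>g u * A - comp_kernel \<alpha> M u\<bar> \<le> g u * D" if u: "u \<in> {i..i+1}" for u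
  proof -
    have "\<alpha> * (M - i) powr (\<alpha> - 1) \<le> \<alpha> * (M - u) powr (\<alpha> - 1)"
      "\<alpha> * (M - u) powr (\<alpha> - 1) \<le> \<alpha> * (M - i - 1) powr (\<alpha> - 1)"
      using u i a by (auto intro!: mult_left_mono powr_mono2')
    then have "\<bar>A - \<alpha> * (M - u) powr (\<alpha> - 1)\<bar> \<le> D"
      using A unfolding D_def by (simp add: abs_le_iff)
    moreover have "\<bar>g u * A - comp_kernel \<alpha> M u\<bar> = g u * \<bar>A - \<alpha> * (M - u) powr (\<alpha> - 1)\<bar>"
      using a by (simp add: g_def comp_kernel_def abs_mult right_diff_distrib[symmetric] mult.assoc)
    moreover have "0 \<le> g u" using a by (simp add: g_def)
    ultimately show ?thesis by (simp add: mult_left_mono)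
  qed
  have "integral {i..i+1} (\<lambda>u. g u * A - comp_kernel \<alpha> M u)
      = integral {i..i+1} (\<lambda>u. g u * A) - integral {i..i+1} (comp_kernel \<alpha> M)"
    using kI has_integral_mult_left[OF gI] by (intro integral_diff) (auto simp: has_integral_integrable)
  also have "integral {i..i+1} (\<lambda>u. g u * A) = B * A"
    using has_integral_mult_left[OF gI] by (rule integral_unique)
  finally have "\<bar>B * A - integral {i..i+1} (comp_kernel \<alpha> M)\<bar>
      = norm (integral {i..i+1} (\<lambda>u. g u * A - comp_kernel \<alpha> M u))"
    by simp
  also have "\<dots> \<le> integral {i..i+1} (\<lambda>u. g u * D)"
    using pointwise kI has_integral_mult_left[OF gI]
    by (intro integral_norm_bound_integral integrable_diff) (auto simp: has_integral_integrable)
  also have "\<dots> = B * D"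
    using has_integral_mult_left[OF gI] by (rule integral_unique)
  finally show ?thesis
    unfolding A_def D_def by (simp add: mult.commute[of B])
qed

text \<open>
  On the last cell both the weight and the integral lie in \<open>[0, (1-\<alpha>)(M-1)\<^sup>-\<^sup>\<alpha>]\<close>,
  since the second factor of \<open>comp_kernel\<close> integrates to 1 there.
\<close>
lemma comp_kernel_last_cell_error:
  fixes \<alpha> M :: real
  assumes a: "0 < \<alpha>" "\<alpha> < 1" and M: "2 \<le> M"
  shows "\<bar>M powr (1 - \<alpha>) - (M - 1) powr (1 - \<alpha>) - integral {M-1..M} (comp_kernel \<alpha> M)\<bar>
         \<le> 2 * M powr (- \<alpha>)"
proof -
  define c where "c = (1 - \<alpha>) * (M - 1) powr (- \<alpha>)"
  have kI: "comp_kernel \<alpha> M integrable_on {M-1..M}"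
    using a M by (intro comp_kernel_integrable_on) auto
  have "((\<lambda>u. \<alpha> * (M - u) powr (\<alpha> - 1)) has_integral 1) {M-1..M}"
    using has_integral_powr_derivative_reflected[of "M - 1" M M \<alpha>] a by simp
  then have cI: "((\<lambda>u. c * (\<alpha> * (M - u) powr (\<alpha> - 1))) has_integral c) {M-1..M}"
    using has_integral_mult_right[of _ 1 _ c] by simp
  have "integral {M-1..M} (comp_kernel \<alpha> M) \<le> integral {M-1..M} (\<lambda>u. c * (\<alpha> * (M - u) powr (\<alpha> - 1)))"
  proof (rule integral_le[OF kI])
    show "(\<lambda>u. c * (\<alpha> * (M - u) powr (\<alpha> - 1))) integrable_on {M-1..M}"
      using cI by blast
    fix u assume "u \<in> {M-1..M}"
    then have "(1 - \<alpha>) * u powr (- \<alpha>) \<le> c"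
      unfolding c_def using a M by (intro mult_left_mono powr_mono2') auto
    then show "comp_kernel \<alpha> M u \<le> c * (\<alpha> * (M - u) powr (\<alpha> - 1))"
      unfolding comp_kernel_def using a by (intro mult_right_mono) auto
  qed
  moreover have "0 \<le> integral {M-1..M} (comp_kernel \<alpha> M)"
    using kI a by (intro integral_nonneg) (auto simp: comp_kernel_def)
  moreover have "M powr (1 - \<alpha>) - (M - 1) powr (1 - \<alpha>) \<le> c"
    using powr_diff_bounds(2)[of "M - 1" M "1 - \<alpha>"] a M by (simp add: c_def)
  moreover have "(M - 1) powr (1 - \<alpha>) \<le> M powr (1 - \<alpha>)"
    using a M by (intro powr_mono2) auto
  ultimately have "\<bar>M powr (1 - \<alpha>) - (M - 1) powr (1 - \<alpha>) - integral {M-1..M} (comp_kernel \<alpha> M)\<bar> \<le> c"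
    using integral_unique[OF cI] by linarith
  also have "c \<le> 1 * (M / 2) powr (- \<alpha>)"
    unfolding c_def using a M by (intro mult_mono powr_mono2') auto
  also have "\<dots> \<le> 2 * M powr (- \<alpha>)"
    using a M by (simp add: powr_divide_le)
  finally show ?thesis .
qed

text \<open>\<open>comp_weight \<alpha> m\<close> is \<open>\<Gamma>(1+\<alpha>)\<Gamma>(2-\<alpha>) c\<^sub>m\<close>.\<close>
definition comp_weight :: "real \<Rightarrow> nat \<Rightarrow> real" where
  "comp_weight \<alpha> m = (\<Sum>i<m. bw \<alpha> (m - i) * bw (1 - \<alpha>) (i + 1))"

lemma sum_triangle_swap:
  fixes a :: "nat \<Rightarrow> nat \<Rightarrow> 'a::comm_monoid_add"
  shows "(\<Sum>i<n. \<Sum>j\<le>i. a i j) = (\<Sum>j<n. \<Sum>i\<in>{j..<n}. a i j)"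
  by (induction n) (auto simp: sum.distrib atLeastLessThanSuc lessThan_Suc_atMost[symmetric] ac_simps)

lemma comp_weight_shift:
  assumes "j < n"
  shows "(\<Sum>i\<in>{j..<n}. bw \<alpha> (n - i) * bw (1 - \<alpha>) (Suc i - j)) = comp_weight \<alpha> (n - j)"
proof -
  define f where "f = (\<lambda>i. bw \<alpha> (n - i) * bw (1 - \<alpha>) (Suc i - j))"
  have "(\<Sum>i\<in>{j..<n}. f i) = (\<Sum>k\<in>{0..<n - j}. f (k + j))"
    using sum.shift_bounds_nat_ivl[of f 0 j "n - j"] assms by simp
  also have "\<dots> = comp_weight \<alpha> (n - j)"
    unfolding comp_weight_def f_def by (intro sum.cong) (auto simp: add.commute)
  finally show ?thesis by (simp add: f_def)
qed

lemma Jfrac_L1_eq: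
  fixes Y :: "nat \<Rightarrow> real"
  assumes "0 < h"
  shows "Jfrac \<alpha> h (L1 \<alpha> h Y) n
         = (\<Sum>j<n. comp_weight \<alpha> (n - j) / (Gamma (1 + \<alpha>) * Gamma (2 - \<alpha>)) * (Y (j + 1) - Y j))"
proof -
  define a where "a = (\<lambda>i j. bw \<alpha> (n - i) * bw (1 - \<alpha>) (Suc i - j) * (Y (j + 1) - Y j))"
  define K where "K = h powr (- \<alpha>) / Gamma (2 - \<alpha>)"
  define S where "S = (\<lambda>i. \<Sum>j<i + 1. bw (1 - \<alpha>) (i + 1 - j) * (Y (j + 1) - Y j))"
  have "Jfrac \<alpha> h (L1 \<alpha> h Y) n = h powr \<alpha> / Gamma (1 + \<alpha>) * (\<Sum>i<n. bw \<alpha> (n - i) * (K * S i))"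
    unfolding Jfrac_def L1_def K_def S_def ..
  also have "\<dots> = h powr \<alpha> / Gamma (1 + \<alpha>) * K * (\<Sum>i<n. bw \<alpha> (n - i) * S i)"
    by (simp add: sum_distrib_left mult_ac)
  also have "h powr \<alpha> / Gamma (1 + \<alpha>) * K = 1 / (Gamma (1 + \<alpha>) * Gamma (2 - \<alpha>))"
    using assms by (simp add: K_def powr_minus field_simps)
  also have "(\<Sum>i<n. bw \<alpha> (n - i) * S i) = (\<Sum>i<n. \<Sum>j\<le>i. a i j)"
    by (simp add: S_def a_def sum_distrib_left lessThan_Suc_atMost mult.assoc)
  also have "(\<Sum>i<n. \<Sum>j\<le>i. a i j) = (\<Sum>j<n. comp_weight \<alpha> (n - j) * (Y (j + 1) - Y j))"
    unfolding sum_triangle_swap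
  proof (rule sum.cong[OF refl])
    fix j assume "j \<in> {..<n}"
    then show "(\<Sum>i\<in>{j..<n}. a i j) = comp_weight \<alpha> (n - j) * (Y (j + 1) - Y j)"
      using comp_weight_shift[of j n \<alpha>] by (simp add: a_def sum_distrib_right[symmetric])
  qed
  finally show ?thesis by (simp add: sum_distrib_left)
qed

text \<open>
  The cells \<open>i < m/2\<close> are controlled by \<open>b\<^sub>i\<^sub>+\<^sub>1(1-\<alpha>) \<le> 1\<close> and the telescoping
  sum of the kernel increments; the remaining cells by \<open>b\<^sub>i\<^sub>+\<^sub>1(1-\<alpha>) \<le> 3m\<^sup>-\<^sup>\<alpha>\<close>.
\<close>
lemma sum_cell_errors_le:
  fixes \<alpha> :: real and m :: nat
  assumes a: "0 < \<alpha>" "\<alpha> < 1" and m: "2 \<le> m"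
  shows "(\<Sum>i<m - 1. bw (1 - \<alpha>) (Suc i) *
            (\<alpha> * (real m - real i - 1) powr (\<alpha> - 1) - \<alpha> * (real m - real i) powr (\<alpha> - 1)))
         \<le> 2 * real m powr (\<alpha> - 1) + 3 * real m powr (- \<alpha>)"
proof -
  define M where "M = real m"
  define D where "D = (\<lambda>i::nat. \<alpha> * (M - real i - 1) powr (\<alpha> - 1) - \<alpha> * (M - real i) powr (\<alpha> - 1))"
  define K where "K = m div 2"
  have M: "2 \<le> M" using m by (simp add: M_def)
  have "1 \<le> K" "K \<le> m - 1" "m \<le> 3 * K" "m \<le> 2 * (m - K)"
    unfolding K_def using m by presburger+
  then have K: "1 \<le> K" "K \<le> m - 1" "M \<le> 3 * real K" "M \<le> 2 * (M - real K)"
    unfolding M_def by (simp_all add: of_nat_diff flip: of_nat_le_iff)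
  have D_nonneg: "0 \<le> D i" if "i < m - 1" for i
    using that a unfolding D_def M_def by (auto intro!: mult_left_mono powr_mono2')
  have D_telescope: "(\<Sum>i<k. D i) = \<alpha> * (M - real k) powr (\<alpha> - 1) - \<alpha> * M powr (\<alpha> - 1)" for k
    using sum_lessThan_telescope[of "\<lambda>j. \<alpha> * (M - real j) powr (\<alpha> - 1)" k]
    by (simp add: D_def algebra_simps)
  have "\<alpha> * (M - real K) powr (\<alpha> - 1) \<le> \<alpha> * (M / 2) powr (\<alpha> - 1)"
    using a K M by (intro mult_left_mono powr_mono2') auto
  moreover have M_term: "0 \<le> \<alpha> * M powr (\<alpha> - 1)" using a by simp
  ultimately have "(\<Sum>i<K. D i) \<le> \<alpha> * (M / 2) powr (\<alpha> - 1)"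
    unfolding D_telescope by linarith
  also have "\<dots> \<le> 1 * (2 * M powr (\<alpha> - 1))"
    using a M powr_divide_le[of M 2 "1 - \<alpha>"] by (intro mult_mono) auto
  finally have "(\<Sum>i<K. D i) \<le> 2 * M powr (\<alpha> - 1)" by simp
  moreover have "(\<Sum>i<K. bw (1 - \<alpha>) (Suc i) * D i) \<le> (\<Sum>i<K. D i)"
    using bw_Suc_nonneg[of "1 - \<alpha>"] bw_Suc_le_one[of "1 - \<alpha>"] D_nonneg a K
    by (intro sum_mono mult_left_le_one_le) auto
  ultimately have first: "(\<Sum>i<K. bw (1 - \<alpha>) (Suc i) * D i) \<le> 2 * M powr (\<alpha> - 1)"
    by linarith
  have "bw (1 - \<alpha>) (Suc i) \<le> 3 * M powr (- \<alpha>)" if "K \<le> i" for i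
    using bw_Suc_le_powr_divide[of "1 - \<alpha>" i M 3] a K M that by simp
  then have "(\<Sum>i\<in>{K..<m-1}. bw (1 - \<alpha>) (Suc i) * D i) \<le> (\<Sum>i\<in>{K..<m-1}. 3 * M powr (- \<alpha>) * D i)"
    using D_nonneg by (intro sum_mono mult_right_mono) auto
  also have "\<dots> \<le> 3 * M powr (- \<alpha>) * (\<Sum>i<m-1. D i)"
    using D_nonneg
    by (subst sum_distrib_left[symmetric]) (intro mult_left_mono sum_mono2, auto)
  also have "\<dots> \<le> 3 * M powr (- \<alpha>) * 1"
  proof (rule mult_left_mono)
    have "M - real (m - 1) = 1" using m by (simp add: M_def of_nat_diff)
    then have "(\<Sum>i<m-1. D i) = \<alpha> - \<alpha> * M powr (\<alpha> - 1)" unfolding D_telescope by simp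
    with a M_term show "(\<Sum>i<m-1. D i) \<le> 1" by linarith
  qed simp
  finally have second: "(\<Sum>i\<in>{K..<m-1}. bw (1 - \<alpha>) (Suc i) * D i) \<le> 3 * M powr (- \<alpha>)"
    by simp
  have "{..<m-1} = {..<K} \<union> {K..<m-1}" "{..<K} \<inter> {K..<m-1} = {}" using K by auto
  then have "(\<Sum>i<m-1. bw (1 - \<alpha>) (Suc i) * D i)
      = (\<Sum>i<K. bw (1 - \<alpha>) (Suc i) * D i) + (\<Sum>i\<in>{K..<m-1}. bw (1 - \<alpha>) (Suc i) * D i)"
    by (simp add: sum.union_disjoint)
  with first second show ?thesis by (simp add: D_def M_def)
qed

lemma comp_weight_error:
  fixes \<alpha> :: real and m :: nat
  assumes a: "0 < \<alpha>" "\<alpha> < 1" and m: "2 \<le> m"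
  shows "\<bar>comp_weight \<alpha> m - Gamma (1 + \<alpha>) * Gamma (2 - \<alpha>)\<bar> \<le> 7 * real m powr (- min \<alpha> (1 - \<alpha>))"
proof -
  define M where "M = real m"
  define I where "I = (\<lambda>i::nat. integral {real i..real i + 1} (comp_kernel \<alpha> M))"
  define T where "T = (\<lambda>i::nat. bw \<alpha> (m - i) * bw (1 - \<alpha>) (Suc i))"
  define E where "E = (\<lambda>i::nat. bw (1 - \<alpha>) (Suc i) *
      (\<alpha> * (M - real i - 1) powr (\<alpha> - 1) - \<alpha> * (M - real i) powr (\<alpha> - 1)))"
  have M: "2 \<le> M" using m by (simp add: M_def)
  have kernel: "(comp_kernel \<alpha> M has_integral Gamma (1 + \<alpha>) * Gamma (2 - \<alpha>)) {0..real m * 1}"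
    using has_integral_comp_kernel[of \<alpha> M] a M by (simp add: M_def)
  then have "Gamma (1 + \<alpha>) * Gamma (2 - \<alpha>) = (\<Sum>i<m. I i)"
    using integral_eq_sum_cells[of "comp_kernel \<alpha> M" m 1]
    by (simp add: I_def integral_unique has_integral_integrable add.commute)
  moreover have "comp_weight \<alpha> m = (\<Sum>i<m. T i)"
    by (simp add: comp_weight_def T_def)
  moreover have "m = Suc (m - 1)" using m by simp
  ultimately have split: "comp_weight \<alpha> m - Gamma (1 + \<alpha>) * Gamma (2 - \<alpha>)
      = (\<Sum>i<m - 1. T i - I i) + (T (m - 1) - I (m - 1))"
    by (metis sum.lessThan_Suc sum_subtractf)
  have cell: "\<bar>T i - I i\<bar> \<le> E i" if "i < m - 1" for i
  proof -
    have "real (m - i) = M - real i" using that by (simp add: M_def of_nat_diff)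
    then have "T i = ((M - real i) powr \<alpha> - (M - real i - 1) powr \<alpha>) *
        ((real i + 1) powr (1 - \<alpha>) - real i powr (1 - \<alpha>))"
      unfolding T_def bw_Suc by (simp add: bw_def)
    then show ?thesis
      using comp_kernel_cell_error[of \<alpha> "real i" M] a that
      by (simp add: E_def I_def bw_Suc M_def)
  qed
  have "\<bar>\<Sum>i<m - 1. T i - I i\<bar> \<le> (\<Sum>i<m - 1. \<bar>T i - I i\<bar>)"
    by (rule sum_abs)
  also have "\<dots> \<le> (\<Sum>i<m - 1. E i)"
    using cell by (intro sum_mono) auto
  also have "\<dots> \<le> 2 * M powr (\<alpha> - 1) + 3 * M powr (- \<alpha>)"
    using sum_cell_errors_le[OF a m] by (simp add: E_def M_def)
  finally have middle: "\<bar>\<Sum>i<m - 1. T i - I i\<bar> \<le> 2 * M powr (\<alpha> - 1) + 3 * M powr (- \<alpha>)" .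
  have last: "\<bar>T (m - 1) - I (m - 1)\<bar> \<le> 2 * M powr (- \<alpha>)"
  proof -
    have "real (m - 1) = M - 1" using m by (simp add: M_def of_nat_diff)
    then show ?thesis
      using comp_kernel_last_cell_error[OF a M] m
      by (simp add: T_def I_def bw_def M_def)
  qed
  have "M powr (\<alpha> - 1) \<le> M powr (- min \<alpha> (1 - \<alpha>))" "M powr (- \<alpha>) \<le> M powr (- min \<alpha> (1 - \<alpha>))"
    using M by (auto intro!: powr_mono)
  with split middle last show ?thesis unfolding M_def by linarith
qed

lemma comp_weight_rel_error:
  fixes \<alpha> :: real and m :: nat
  assumes a: "0 < \<alpha>" "\<alpha> < 1" and m: "1 \<le> m"
  defines "G \<equiv> Gamma (1 + \<alpha>) * Gamma (2 - \<alpha>)"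
  shows "\<bar>comp_weight \<alpha> m / G - 1\<bar> \<le> (7 + G) / G * real m powr (- min \<alpha> (1 - \<alpha>))"
proof -
  have G: "0 < G" using a by (simp add: G_def)
  have "\<bar>comp_weight \<alpha> m - G\<bar> \<le> (7 + G) * real m powr (- min \<alpha> (1 - \<alpha>))"
  proof (cases "m = 1")
    case True
    then show ?thesis using G by (simp add: comp_weight_def bw_def)
  next
    case False
    then have "\<bar>comp_weight \<alpha> m - G\<bar> \<le> 7 * real m powr (- min \<alpha> (1 - \<alpha>))"
      using comp_weight_error[OF a] m unfolding G_def by simp
    also have "\<dots> \<le> (7 + G) * real m powr (- min \<alpha> (1 - \<alpha>))"
      using G by (intro mult_right_mono) auto
    finally show ?thesis .
  qed
  moreover have "\<bar>comp_weight \<alpha> m / G - 1\<bar> = \<bar>comp_weight \<alpha> m - G\<bar> / G"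
    using G by (simp add: field_simps)
  ultimately show ?thesis
    using G by (simp add: divide_right_mono)
qed

lemma abs_diff_le_integral_abs_deriv:
  fixes y y' :: "real \<Rightarrow> real"
  assumes "a \<le> b" "{a..b} \<subseteq> S"
    and deriv: "\<And>x. x \<in> S \<Longrightarrow> (y has_real_derivative y' x) (at x within S)"
    and cont: "continuous_on {a..b} y'"
  shows "\<bar>y b - y a\<bar> \<le> integral {a..b} (\<lambda>s. \<bar>y' s\<bar>)"
proof -
  have "(y' has_integral (y b - y a)) {a..b}"
  proof (rule fundamental_theorem_of_calculus[OF assms(1)])
    fix x assume "x \<in> {a..b}"
    then have "(y has_real_derivative y' x) (at x within {a..b})"
      using assms(2) by (intro has_field_derivative_subset[OF deriv]) auto
    then show "(y has_vector_derivative y' x) (at x within {a..b})"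
      by (simp add: has_real_derivative_iff_has_vector_derivative)
  qed
  then have "\<bar>y b - y a\<bar> = norm (integral {a..b} y')"
    by (simp add: integral_unique)
  also have "\<dots> \<le> integral {a..b} (\<lambda>s. \<bar>y' s\<bar>)"
    using cont by (intro integral_norm_bound_integral integrable_continuous_interval continuous_intros) auto
  finally show ?thesis .
qed

lemma integrable_powr_weight:
  fixes t \<beta> :: real and g :: "real \<Rightarrow> real"
  assumes "0 < t" "0 < \<beta>" "\<beta> < 1" and g: "continuous_on {0..t} g"
  shows "(\<lambda>s. (t - s) powr (- \<beta>) * g s) integrable_on {0..t}"
proof -
  have "((\<lambda>u. (1 - \<beta>) * (t - u) powr (- \<beta>)) has_integral (t powr (1 - \<beta>))) {0..t}"
    using has_integral_powr_derivative_reflected[of 0 t t "1 - \<beta>"] assms by simp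
  then have "(\<lambda>u. (t - u) powr (- \<beta>)) integrable_on {0..t}"
    using integrable_on_cmult_iff[of "1 - \<beta>"] assms by (auto simp: has_integral_integrable)
  then have "(\<lambda>u. (t - u) powr (- \<beta>)) absolutely_integrable_on {0..t}"
    by (subst absolutely_integrable_on_iff_nonneg) auto
  then have "(\<lambda>s. g s * (t - s) powr (- \<beta>)) absolutely_integrable_on {0..t}"
    using g by (intro absolutely_integrable_bounded_measurable_product_real
        continuous_imp_measurable_on_sets_lebesgue compact_imp_bounded compact_continuous_image) auto
  then show ?thesis
    by (simp add: set_lebesgue_integral_eq_integral(1) mult.commute)
qed

lemma powr_weight_mul_integral_le:
  fixes a b t \<beta> :: real and g :: "real \<Rightarrow> real"
  assumes "a \<le> b" "b \<le> t" "a < t" "0 < \<beta>"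
    and g: "g integrable_on {a..b}" "\<And>s. s \<in> {a..b} \<Longrightarrow> 0 \<le> g s"
    and w: "(\<lambda>s. (t - s) powr (- \<beta>) * g s) integrable_on {a..b}"
  shows "(t - a) powr (- \<beta>) * integral {a..b} g \<le> integral {a..b} (\<lambda>s. (t - s) powr (- \<beta>) * g s)"
proof -
  \<comment> \<open>At \<open>s = t\<close> the weight is \<open>0 powr (- \<beta>) = 0\<close>, so that point is removed as a spike.\<close>
  define v where "v = (\<lambda>s. if s = t then 0 else (t - a) powr (- \<beta>) * g s)"
  have "(t - a) powr (- \<beta>) * integral {a..b} g = integral {a..b} (\<lambda>s. (t - a) powr (- \<beta>) * g s)"
    by simp
  also have "\<dots> = integral {a..b} v"
    by (rule integral_spike[of "{t}"]) (auto simp: v_def)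
  also have "\<dots> \<le> integral {a..b} (\<lambda>s. (t - s) powr (- \<beta>) * g s)"
  proof (rule integral_le[OF _ w])
    show "v integrable_on {a..b}"
      using integrable_cmul[OF g(1), of "(t - a) powr (- \<beta>)"] unfolding v_def
      by (rule integrable_spike_finite[of "{t}", rotated 2]) auto
    fix s assume s: "s \<in> {a..b}"
    show "v s \<le> (t - s) powr (- \<beta>) * g s"
    proof (cases "s = t")
      case False
      then have "(t - a) powr (- \<beta>) \<le> (t - s) powr (- \<beta>)"
        using s assms by (intro powr_mono2') auto
      then show ?thesis using False g(2)[OF s] by (simp add: v_def mult_right_mono)
    qed (simp add: v_def)
  qed
  finally show ?thesis .
qed

lemma cell_powr_weight_le:
  fixes \<beta> h :: real and j n :: nat and g :: "real \<Rightarrow> real"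
  assumes "0 < \<beta>" "0 < h" "j < n"
    and g: "g integrable_on {real j * h..real (Suc j) * h}"
      "\<And>s. s \<in> {real j * h..real (Suc j) * h} \<Longrightarrow> 0 \<le> g s"
    and w: "(\<lambda>s. (real n * h - s) powr (- \<beta>) * g s) integrable_on {real j * h..real (Suc j) * h}"
  shows "real (n - j) powr (- \<beta>) * integral {real j * h..real (Suc j) * h} g
         \<le> h powr \<beta> * integral {real j * h..real (Suc j) * h} (\<lambda>s. (real n * h - s) powr (- \<beta>) * g s)"
proof -
  have "real n * h - real j * h = h * real (n - j)"
    using assms by (simp add: of_nat_diff algebra_simps)
  then have "h powr \<beta> * (real n * h - real j * h) powr (- \<beta>)
      = (h powr \<beta> * h powr (- \<beta>)) * real (n - j) powr (- \<beta>)"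
    using assms by (simp add: powr_mult)
  then have "real (n - j) powr (- \<beta>) = h powr \<beta> * (real n * h - real j * h) powr (- \<beta>)"
    using assms by (simp add: powr_add[symmetric])
  moreover have "(real n * h - real j * h) powr (- \<beta>) * integral {real j * h..real (Suc j) * h} g
      \<le> integral {real j * h..real (Suc j) * h} (\<lambda>s. (real n * h - s) powr (- \<beta>) * g s)"
    using assms by (intro powr_weight_mul_integral_le g w) (auto intro!: mult_right_mono)
  ultimately show ?thesis
    using assms by (simp add: mult.assoc mult_left_mono)
qed

lemma Jfrac_L1_remainder_bound:
  fixes \<alpha> t :: real and n :: nat and y y' :: "real \<Rightarrow> real" and S :: "real set"
  assumes a: "0 < \<alpha>" "\<alpha> < 1" and t: "0 < t" and n: "1 \<le> n" and S: "{0..t} \<subseteq> S"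
    and deriv: "\<And>x. x \<in> S \<Longrightarrow> (y has_real_derivative y' x) (at x within S)"
    and cont: "continuous_on {0..t} y'"
  defines "h \<equiv> t / real n" and "\<beta> \<equiv> min \<alpha> (1 - \<alpha>)" and "G \<equiv> Gamma (1 + \<alpha>) * Gamma (2 - \<alpha>)"
  shows "\<bar>Jfrac \<alpha> h (L1 \<alpha> h (\<lambda>k. y (real k * h))) n - (y (real n * h) - y 0)\<bar>
         \<le> (7 + G) / G * h powr \<beta> * integral {0..t} (\<lambda>s. (t - s) powr (- \<beta>) * \<bar>y' s\<bar>)"
proof -
  define C where "C = (7 + G) / G"
  define Y where "Y = (\<lambda>k. y (real k * h))"
  define w where "w = (\<lambda>s. (t - s) powr (- \<beta>) * \<bar>y' s\<bar>)"
  define cell where "cell = (\<lambda>j::nat. {real j * h..real (Suc j) * h})"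
  have h: "0 < h" "real n * h = t" using t n by (auto simp: h_def)
  have \<beta>: "0 < \<beta>" "\<beta> < 1" using a by (auto simp: \<beta>_def)
  have "0 < G" using a by (simp add: G_def)
  then have "0 \<le> C" by (simp add: C_def)
  have wI: "w integrable_on {0..t}"
    unfolding w_def using t \<beta> cont by (intro integrable_powr_weight continuous_intros)
  have cell_le: "real j * h \<le> real (Suc j) * h" for j
    using h by (simp add: algebra_simps)
  have cell_sub: "cell j \<subseteq> {0..t}" if "j < n" for j
  proof -
    have "real (Suc j) * h \<le> real n * h" using that h by (intro mult_right_mono) auto
    then show ?thesis using h by (auto simp: cell_def)
  qed
  have term_bound: "\<bar>(comp_weight \<alpha> (n - j) / G - 1) * (Y (j + 1) - Y j)\<bar> \<le> C * h powr \<beta> * integral (cell j) w"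
    if j: "j < n" for j
  proof -
    have cont_cell: "continuous_on (cell j) (\<lambda>s. \<bar>y' s\<bar>)"
      using cont cell_sub[OF j] by (intro continuous_intros) (auto intro: continuous_on_subset)
    have increment: "\<bar>Y (Suc j) - Y j\<bar> \<le> integral (cell j) (\<lambda>s. \<bar>y' s\<bar>)"
      unfolding Y_def cell_def using cell_sub[OF j] S cont
      by (intro abs_diff_le_integral_abs_deriv[OF cell_le _ deriv]) (auto simp: cell_def intro: continuous_on_subset)
    have weight: "\<bar>comp_weight \<alpha> (n - j) / G - 1\<bar> \<le> C * real (n - j) powr (- \<beta>)"
      using comp_weight_rel_error[OF a, of "n - j"] j by (simp add: C_def G_def \<beta>_def)
    have "(\<lambda>s. (real n * h - s) powr (- \<beta>) * \<bar>y' s\<bar>) integrable_on cell j"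
      using integrable_subinterval_real[OF wI cell_sub[OF j, unfolded cell_def]] by (simp add: w_def h(2) cell_def)
    then have local: "real (n - j) powr (- \<beta>) * integral (cell j) (\<lambda>s. \<bar>y' s\<bar>)
        \<le> h powr \<beta> * integral (cell j) w"
      using cell_powr_weight_le[OF \<beta>(1) h(1) j integrable_continuous_interval[OF cont_cell[unfolded cell_def]]]
      unfolding w_def cell_def h(2)[symmetric] by simp
    have "\<bar>(comp_weight \<alpha> (n - j) / G - 1) * (Y (j + 1) - Y j)\<bar>
        \<le> C * (real (n - j) powr (- \<beta>) * integral (cell j) (\<lambda>s. \<bar>y' s\<bar>))"
      unfolding abs_mult mult.assoc[symmetric] using weight increment \<open>0 \<le> C\<close> by (simp add: mult_mono)
    also have "\<dots> \<le> C * h powr \<beta> * integral (cell j) w"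
      using local \<open>0 \<le> C\<close> by (simp add: mult_left_mono mult.assoc)
    finally show ?thesis .
  qed
  have "Jfrac \<alpha> h (L1 \<alpha> h Y) n - (Y n - Y 0) = (\<Sum>j<n. (comp_weight \<alpha> (n - j) / G - 1) * (Y (j + 1) - Y j))"
    using Jfrac_L1_eq[OF h(1), of \<alpha> Y n] sum_lessThan_telescope[of Y n]
    by (simp add: G_def sum_subtractf left_diff_distrib)
  also have "\<bar>\<dots>\<bar> \<le> (\<Sum>j<n. C * h powr \<beta> * integral (cell j) w)"
    using term_bound by (intro order_trans[OF sum_abs] sum_mono) auto
  also have "\<dots> = C * h powr \<beta> * integral {0..t} w"
    using integral_eq_sum_cells[of w n h] wI h by (simp add: cell_def sum_distrib_left)
  finally show ?thesis by (simp add: Y_def C_def w_def)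
qed

theorem theorem2:
  fixes \<alpha> T :: real and y y' :: "real \<Rightarrow> real"
  assumes "0 < \<alpha>" "\<alpha> < 1" "0 < T"
    and "\<And>x. x \<in> {0..T} \<Longrightarrow> (y has_real_derivative y' x) (at x within {0..T})"
    and "continuous_on {0..T} y'"
  shows "\<exists>C. \<forall>t \<in> {0<..<T}. \<exists>n0. \<forall>n \<ge> n0.
    (let h = t / real n; \<beta> = min \<alpha> (1 - \<alpha>);
         r = Jfrac \<alpha> h (L1 \<alpha> h (\<lambda>k. y (real k * h))) n - (y (real n * h) - y 0)
     in \<bar>r\<bar> \<le> C * h powr \<beta> * integral {0..t} (\<lambda>s. (t - s) powr (- \<beta>) * \<bar>y' s\<bar>))"
proof -
  define G where "G = Gamma (1 + \<alpha>) * Gamma (2 - \<alpha>)"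
  have "\<bar>Jfrac \<alpha> (t / real n) (L1 \<alpha> (t / real n) (\<lambda>k. y (real k * (t / real n)))) n
          - (y (real n * (t / real n)) - y 0)\<bar>
        \<le> (7 + G) / G * (t / real n) powr min \<alpha> (1 - \<alpha>)
          * integral {0..t} (\<lambda>s. (t - s) powr (- min \<alpha> (1 - \<alpha>)) * \<bar>y' s\<bar>)"
    if "t \<in> {0<..<T}" "1 \<le> n" for t n
    unfolding G_def using that assms(1,2,4)
    by (intro Jfrac_L1_remainder_bound[where S = "{0..T}"] continuous_on_subset[OF assms(5)]) auto
  then show ?thesis
    unfolding Let_def by blast
qed

end
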